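(* Let $0<q<1$, $\sigma,w\in\mathbb{C}$ with $w\ne0$ and $q^\sigma\notin q^{\mathbb{Z}}$ (complex powers of $w$ taken with one fixed branch of $\log w$). Then \[ \lim_{\substack{|\nu|\to\infty\\ \nu\in-\sigma-\mathbb{N}}}\sin(\pi\nu)\,q^{\nu(\nu+1)/4}\,w^{-\nu}\,\mathfrak{j}_\nu(2w;q) =-\sin(\pi\sigma)\,q^{-\sigma(1-\sigma)/2}\,\frac{(q^\sigma;q)_\infty(q^{1-\sigma};q)_\infty(-q^{1/2}w^2;q)_\infty}{(q;q)_\infty}. \]
   Context: Complex powers of $q$ are $q^s=e^{s\log q}$. $(a;q)_k=\prod_{j=0}^{k-1}(1-aq^j)$, $(a;q)_\infty=\lim_k(a;q)_k$, ${}_0\phi_1(;b;q,z)=\sum_{k\ge0}\frac{q^{k(k-1)}}{(q;q)_k(b;q)_k}z^k$, and \[ \mathfrak{j}_\nu(x;q)=q^{\nu(\nu+1)/4}\frac{(q^{\nu+1};q)_\infty}{(q;q)_\infty}\left(\frac{x}{2}\right)^{\nu}{}_0\phi_1\!\left(;q^{\nu+1};q,-q^{\nu+3/2}\frac{x^2}{4}\right). \] The limit is taken along $\nu=-\sigma-n$, $n\in\mathbb{N}$, $n\to\infty$. *)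

theory Defs
  imports Complex_Main
begin

definition qpow :: "real \<Rightarrow> complex \<Rightarrow> complex" where
  "qpow q s = exp (s * complex_of_real (ln q))"

definition qpoch :: "complex \<Rightarrow> real \<Rightarrow> nat \<Rightarrow> complex" where
  "qpoch a q k = (\<Prod>j<k. 1 - a * complex_of_real q ^ j)"

definition qpoch_inf :: "complex \<Rightarrow> real \<Rightarrow> complex" where
  "qpoch_inf a q = lim (\<lambda>k. qpoch a q k)"

definition phi01 :: "complex \<Rightarrow> real \<Rightarrow> complex \<Rightarrow> complex" where
  "phi01 b q z = (\<Sum>k. complex_of_real (q ^ (k * (k - 1)))
       / (qpoch (complex_of_real q) q k * qpoch b q k) * z ^ k)"

text \<open>The q-Bessel function j_nu(x;q).  The complex power (x/2)^nu is taken as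
  exp(nu * Lx), where Lx is the chosen branch of log(x/2).\<close>
definition jfrak :: "real \<Rightarrow> complex \<Rightarrow> complex \<Rightarrow> complex \<Rightarrow> complex" where
  "jfrak q \<nu> Lx x =
     qpow q (\<nu> * (\<nu> + 1) / 4) * qpoch_inf (qpow q (\<nu> + 1)) q
       / qpoch_inf (complex_of_real q) q
     * exp (\<nu> * Lx)
     * phi01 (qpow q (\<nu> + 1)) q (- qpow q (\<nu> + 3/2) * x ^ 2 / 4)"

end

theory Submission
  imports Defs "HOL-Analysis.Analysis"
begin

text \<open>
  Write \<open>\<nu> = -\<sigma> - n\<close>. Splitting \<open>(q\<^bsup>\<nu>+1\<^esup>;q)\<^sub>\<infinity> = (q\<^bsup>1-\<sigma>-n\<^esup>;q)\<^sub>n (q\<^bsup>1-\<sigma>\<^esup>;q)\<^sub>\<infinity>\<close> and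
  reversing the finite product turns it into \<open>\<plusminus>q\<^bsup>\<dots>\<^esup>(q\<^bsup>\<sigma>\<^esup>;q)\<^sub>n\<close>; the signs of this
  factor and of \<open>sin(\<pi>\<nu>)\<close> cancel, and all powers of \<open>q\<close> and \<open>w\<close> collapse to
  \<open>q\<^bsup>-\<sigma>(1-\<sigma>)/2\<^esup>\<close>. What remains is the limit of the \<open>\<^sub>0\<phi>\<^sub>1\<close> series. Its \<open>k\<close>-th term
  is a product of \<open>k\<close> factors which, as \<open>n \<rightarrow> \<infinity>\<close>, tend to the factors of Euler's series
  \<open>\<Sum>\<^sub>k q\<^bsup>k(k-1)/2\<^esup> x\<^sup>k / (q;q)\<^sub>k = (-x;q)\<^sub>\<infinity>\<close> with \<open>x = q\<^bsup>1/2\<^esup>w\<^sup>2\<close>. The hypothesis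
  \<open>q\<^sup>\<sigma> \<notin> q\<^sup>\<int>\<close> keeps the denominators \<open>1 - q\<^bsup>1-\<sigma>-n+j\<^esup>\<close> uniformly away from zero relative
  to \<open>q\<^sup>j\<close>, so the \<open>j\<close>-th factor is \<open>O(q\<^sup>j)\<close> uniformly in \<open>n\<close> and Tannery's theorem
  justifies passing to the limit termwise.
\<close>

section \<open>Complex powers of \<open>q\<close> and \<open>q\<close>-Pochhammer symbols\<close>

lemma qpow_add: "qpow q (a + b) = qpow q a * qpow q b"
  by (simp add: qpow_def distrib_right exp_add)

lemma qpow_nonzero: "qpow q a \<noteq> 0"
  by (simp add: qpow_def)

lemma qpow_of_nat: "0 < q \<Longrightarrow> qpow q (of_nat n) = complex_of_real q ^ n"
  by (simp add: qpow_def exp_of_nat_mult exp_of_real)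

lemma qpoch_LIMSEQ:
  assumes "\<bar>q\<bar> < 1"
  shows "(\<lambda>k. qpoch a q k) \<longlonglongrightarrow> qpoch_inf a q"
proof -
  let ?f = "\<lambda>j. 1 - a * complex_of_real q ^ j"
  have "summable (\<lambda>j. norm (?f j - 1))"
    using assms by (simp add: norm_mult norm_power summable_mult summable_geometric)
  then have "convergent_prod ?f"
    by (intro abs_convergent_prod_imp_convergent_prod summable_imp_abs_convergent_prod)
  then have "(\<lambda>n. \<Prod>j\<le>n. ?f j) \<longlonglongrightarrow> prodinf ?f"
    by (rule convergent_prod_LIMSEQ)
  then have "(\<lambda>n. qpoch a q (Suc n)) \<longlonglongrightarrow> prodinf ?f"
    by (simp add: qpoch_def lessThan_Suc_atMost)
  then have lim: "(\<lambda>n. qpoch a q n) \<longlonglongrightarrow> prodinf ?f"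
    using filterlim_sequentially_Suc by blast
  then have "qpoch_inf a q = prodinf ?f"
    unfolding qpoch_inf_def by (rule limI)
  with lim show ?thesis by simp
qed

lemma qpoch_add: "qpoch a q (n + k) = qpoch a q n * qpoch (a * complex_of_real q ^ n) q k"
  by (induction k) (auto simp: qpoch_def power_add mult_ac)

lemma qpoch_inf_eq_qpoch_mult:
  assumes "\<bar>q\<bar> < 1"
  shows "qpoch_inf a q = qpoch a q n * qpoch_inf (a * complex_of_real q ^ n) q"
proof -
  have "(\<lambda>k. qpoch a q (k + n)) \<longlonglongrightarrow> qpoch_inf a q"
    using qpoch_LIMSEQ[OF assms] by (rule LIMSEQ_ignore_initial_segment)
  moreover have "(\<lambda>k. qpoch a q (k + n)) \<longlonglongrightarrow> qpoch a q n * qpoch_inf (a * complex_of_real q ^ n) q"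
    unfolding add.commute[of _ n] qpoch_add
    by (intro tendsto_mult tendsto_const qpoch_LIMSEQ assms)
  ultimately show ?thesis by (rule LIMSEQ_unique)
qed

lemma qpoch_reflect:
  assumes "0 < q"
  shows "qpoch (qpow q (1 - \<sigma> - of_nat n)) q n
       = (-1) ^ n * qpow q (of_nat n * (1 - \<sigma>) - of_nat n * (of_nat n + 1) / 2) * qpoch (qpow q \<sigma>) q n"
proof (induction n)
  case 0
  then show ?case by (simp add: qpoch_def qpow_def)
next
  case (Suc n)
  define Q where "Q = complex_of_real q"
  define b where "b = qpow q (1 - \<sigma> - of_nat (Suc n))"
  define s where "s = qpow q \<sigma>"
  define E where "E = (\<lambda>n::nat. of_nat n * (1 - \<sigma>) - of_nat n * (of_nat n + 1) / (2::complex))"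
  have "b * Q = qpow q ((1 - \<sigma> - of_nat (Suc n)) + 1)"
    using qpow_of_nat[OF assms, of 1] by (simp only: b_def Q_def qpow_add) simp
  also have "(1 - \<sigma> - of_nat (Suc n)) + 1 = 1 - \<sigma> - of_nat n"
    by simp
  finally have bQ: "b * Q = qpow q (1 - \<sigma> - of_nat n)" .
  have "qpoch b q (Suc n) = (1 - b) * qpoch (qpow q (1 - \<sigma> - of_nat n)) q n"
    unfolding qpoch_def prod.lessThan_Suc_shift
    by (simp add: Q_def[symmetric] bQ[symmetric] mult.assoc)
  also have "\<dots> = (1 - b) * ((-1) ^ n * qpow q (E n) * qpoch s q n)"
    using Suc by (simp add: E_def s_def)
  also have "\<dots> = (-1) ^ Suc n * (qpow q (E n) * b) * (qpoch s q n * (1 - s * Q ^ n))"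
  proof -
    have "b * s * Q ^ n = qpow q ((1 - \<sigma> - of_nat (Suc n)) + \<sigma> + of_nat n)"
      by (simp only: qpow_add b_def s_def Q_def qpow_of_nat[OF assms])
    also have "\<dots> = 1"
      by (simp add: qpow_def algebra_simps)
    finally have "b * s * Q ^ n = 1" .
    then show ?thesis by (simp add: algebra_simps)
  qed
  also have "qpow q (E n) * b = qpow q (E (Suc n))"
    unfolding b_def qpow_add[symmetric] by (simp add: E_def field_simps)
  also have "qpoch s q n * (1 - s * Q ^ n) = qpoch s q (Suc n)"
    by (simp add: qpoch_def Q_def)
  finally show ?case by (simp add: b_def E_def s_def)
qed

section \<open>Euler's series for \<open>(-x;q)\<^sub>\<infinity>\<close>\<close>

lemma summable_prod_geometric:
  fixes q A :: real
  assumes "0 \<le> q" "q < 1" "0 \<le> A"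
  shows "summable (\<lambda>k. \<Prod>j<k. q ^ j * A)"
proof -
  have "(\<lambda>k. q ^ k * A) \<longlonglongrightarrow> 0 * A"
    using assms by (intro tendsto_mult tendsto_const LIMSEQ_realpow_zero) auto
  then have "eventually (\<lambda>k. q ^ k * A < 1/2) sequentially"
    by (intro order_tendstoD(2)) auto
  then obtain N where N: "\<And>k. k \<ge> N \<Longrightarrow> q ^ k * A < 1/2"
    by (auto simp: eventually_sequentially)
  show ?thesis
  proof (rule summable_ratio_test[where c="1/2" and N=N])
    fix k assume "N \<le> k"
    have nonneg: "0 \<le> (\<Prod>j<k. q ^ j * A)" using assms by (intro prod_nonneg) auto
    have "norm (\<Prod>j<Suc k. q ^ j * A) = (\<Prod>j<k. q ^ j * A) * (q ^ k * A)"
      using assms nonneg by simp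
    also have "\<dots> \<le> (\<Prod>j<k. q ^ j * A) * (1/2)"
      using N[OF \<open>N \<le> k\<close>] nonneg by (intro mult_left_mono) auto
    finally show "norm (\<Prod>j<Suc k. q ^ j * A) \<le> 1/2 * norm (\<Prod>j<k. q ^ j * A)"
      using nonneg by simp
  qed simp
qed

lemma tendsto_suminf_prod:
  fixes h :: "nat \<Rightarrow> nat \<Rightarrow> 'a :: {real_normed_field, banach}"
  assumes "0 \<le> q" "q < 1"
    and bound: "\<And>n j. norm (h n j) \<le> q ^ j * A"
    and lim: "\<And>j. (\<lambda>n. h n j) \<longlonglongrightarrow> g j"
  shows "(\<lambda>n. \<Sum>k. \<Prod>j<k. h n j) \<longlonglongrightarrow> (\<Sum>k. \<Prod>j<k. g j)"
proof -
  have "0 \<le> A"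
    using order_trans[OF norm_ge_zero bound[of 0 0]] by simp
  have "eventually (\<lambda>n. summable (\<lambda>k. norm (\<Prod>j<k. h n j))) sequentially \<and>
        summable (\<lambda>k. norm (\<Prod>j<k. g j)) \<and>
        (\<lambda>n. \<Sum>k. \<Prod>j<k. h n j) \<longlonglongrightarrow> (\<Sum>k. \<Prod>j<k. g j)"
  proof (rule tannerys_theorem[where M="\<lambda>k. \<Prod>j<k. q ^ j * A"])
    show "(\<lambda>n. \<Prod>j<k. h n j) \<longlonglongrightarrow> (\<Prod>j<k. g j)" for k
      by (intro tendsto_prod lim)
    show "eventually (\<lambda>(k, n). norm (\<Prod>j<k. h n j) \<le> (\<Prod>j<k. q ^ j * A)) (at_top \<times>\<^sub>F sequentially)"
      by (intro always_eventually allI, clarify, unfold prod_norm[symmetric],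
          intro prod_mono conjI norm_ge_zero bound)
    show "summable (\<lambda>k. \<Prod>j<k. q ^ j * A)"
      using assms \<open>0 \<le> A\<close> by (intro summable_prod_geometric)
  qed simp
  then show ?thesis by blast
qed

lemma norm_one_minus_power_ge:
  fixes z :: "'a :: real_normed_div_algebra"
  assumes "norm z \<le> 1"
  shows "1 - norm z \<le> norm (1 - z ^ Suc j)"
proof -
  have "norm z ^ Suc j \<le> norm z ^ 1"
    using assms by (intro power_decreasing) auto
  then have "norm (z ^ Suc j) \<le> norm z"
    by (simp only: norm_power power_one_right)
  then show ?thesis
    using norm_triangle_ineq2[of 1 "z ^ Suc j"] by simp
qed

text \<open>The \<open>k\<close>-th term \<open>q\<^bsup>k(k-1)/2\<^esup> x\<^sup>k / (q;q)\<^sub>k\<close> of Euler's series, as a product of \<open>k\<close> factors.\<close>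

definition euler_term :: "real \<Rightarrow> complex \<Rightarrow> nat \<Rightarrow> complex" where
  "euler_term q x k = (\<Prod>j<k. x * complex_of_real q ^ j / (1 - complex_of_real q ^ Suc j))"

lemma norm_euler_factor_le:
  assumes "0 \<le> q" "q < 1" "norm x \<le> B"
  shows "norm (x * complex_of_real q ^ j / (1 - complex_of_real q ^ Suc j)) \<le> q ^ j * (B / (1 - q))"
proof -
  have "1 - q \<le> norm (1 - complex_of_real q ^ Suc j)"
    using norm_one_minus_power_ge[of "complex_of_real q" j] assms by simp
  moreover have "norm x * q ^ j \<le> B * q ^ j" "0 \<le> B"
    using assms norm_ge_zero[of x] by (auto intro: mult_right_mono simp del: norm_ge_zero)
  ultimately have "norm x * q ^ j / norm (1 - complex_of_real q ^ Suc j) \<le> B * q ^ j / (1 - q)"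
    using assms by (intro frac_le) auto
  then show ?thesis
    using assms by (simp add: norm_mult norm_divide norm_power mult_ac)
qed

lemma summable_euler_term:
  assumes "0 \<le> q" "q < 1"
  shows "summable (euler_term q x)"
proof (rule summable_norm_cancel, rule summable_comparison_test)
  have "norm (euler_term q x k) \<le> (\<Prod>j<k. q ^ j * (norm x / (1 - q)))" for k
    unfolding euler_term_def prod_norm[symmetric]
    using assms by (intro prod_mono conjI norm_ge_zero norm_euler_factor_le) auto
  then show "\<exists>N. \<forall>k\<ge>N. norm (norm (euler_term q x k)) \<le> (\<Prod>j<k. q ^ j * (norm x / (1 - q)))"
    by simp
  show "summable (\<lambda>k. \<Prod>j<k. q ^ j * (norm x / (1 - q)))"
    using assms by (intro summable_prod_geometric) auto
qed

lemma euler_term_Suc: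
  assumes "0 \<le> q" "q < 1"
  shows "euler_term q x (Suc k)
       = euler_term q (complex_of_real q * x) (Suc k) + x * euler_term q (complex_of_real q * x) k"
proof -
  define Q where "Q = complex_of_real q"
  define C where "C = (\<Prod>j<k. Q ^ j / (1 - Q ^ Suc j))"
  have closed: "euler_term q y m = y ^ m * (\<Prod>j<m. Q ^ j / (1 - Q ^ Suc j))" for y m
    unfolding euler_term_def Q_def times_divide_eq_right[symmetric] prod.distrib by simp
  have "1 - q \<le> norm (1 - Q ^ Suc k)"
    using norm_one_minus_power_ge[of Q k] assms by (simp add: Q_def)
  then have "1 - Q ^ Suc k \<noteq> 0" using assms by auto
  then show ?thesis
    unfolding closed Q_def[symmetric] prod.lessThan_Suc C_def[symmetric]
    by (simp add: field_simps power_mult_distrib)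
qed

lemma suminf_euler_term_eq:
  assumes "0 \<le> q" "q < 1"
  shows "suminf (euler_term q x) = (1 + x) * suminf (euler_term q (complex_of_real q * x))"
proof -
  let ?g = "euler_term q (complex_of_real q * x)"
  have summ: "summable (euler_term q x)" "summable ?g"
    using summable_euler_term[OF assms] by auto
  have "suminf (euler_term q x) = 1 + (\<Sum>k. euler_term q x (Suc k))"
    using suminf_split_head[OF summ(1)] by (simp add: euler_term_def)
  also have "(\<Sum>k. euler_term q x (Suc k)) = (\<Sum>k. ?g (Suc k) + x * ?g k)"
    by (intro arg_cong[where f=suminf] ext euler_term_Suc[OF assms])
  also have "\<dots> = (\<Sum>k. ?g (Suc k)) + x * suminf ?g"
    using suminf_add[of "\<lambda>k. ?g (Suc k)" "\<lambda>k. x * ?g k"] suminf_mult[OF summ(2), of x] summ(2)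
    by (simp add: summable_Suc_iff summable_mult)
  also have "(\<Sum>k. ?g (Suc k)) = suminf ?g - 1"
    using suminf_split_head[OF summ(2)] by (simp add: euler_term_def)
  finally show ?thesis by (simp add: algebra_simps)
qed

theorem suminf_euler_term:
  assumes "0 \<le> q" "q < 1"
  shows "suminf (euler_term q x) = qpoch_inf (- x) q"
proof -
  define Q where "Q = complex_of_real q"
  have iterate: "suminf (euler_term q x) = qpoch (- x) q N * suminf (euler_term q (Q ^ N * x))" for N
  proof (induction N)
    case (Suc N)
    then show ?case
      using suminf_euler_term_eq[OF assms, of "Q ^ N * x"] by (simp add: qpoch_def Q_def mult_ac)
  qed (simp add: qpoch_def)
  have "(\<lambda>N. \<Sum>k. \<Prod>j<k. Q ^ N * x * Q ^ j / (1 - Q ^ Suc j)) \<longlonglongrightarrow> (\<Sum>k. \<Prod>j<k. 0)"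
  proof (rule tendsto_suminf_prod[OF assms])
    show "norm (Q ^ N * x * Q ^ j / (1 - Q ^ Suc j)) \<le> q ^ j * (norm x / (1 - q))" for N j
      using assms unfolding Q_def
      by (intro norm_euler_factor_le) (auto simp: norm_mult norm_power mult_left_le_one_le power_le_one)
    have "(\<lambda>N. Q ^ N) \<longlonglongrightarrow> 0"
      using assms by (intro LIMSEQ_power_zero) (simp add: Q_def)
    then show "(\<lambda>N. Q ^ N * x * Q ^ j / (1 - Q ^ Suc j)) \<longlonglongrightarrow> 0" for j
      by (intro tendsto_divide_zero tendsto_mult_left_zero)
  qed
  then have "(\<lambda>N. suminf (euler_term q (Q ^ N * x))) \<longlonglongrightarrow> 1"
    by (simp add: euler_term_def[abs_def] Q_def suminf_geometric)
  then have "(\<lambda>N. qpoch (- x) q N * suminf (euler_term q (Q ^ N * x))) \<longlonglongrightarrow> qpoch_inf (- x) q * 1"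
    using assms by (intro tendsto_mult qpoch_LIMSEQ) auto
  then show ?thesis
    unfolding iterate[symmetric] by (simp add: LIMSEQ_const_iff)
qed

section \<open>The limit of the \<open>\<^sub>0\<phi>\<^sub>1\<close> series\<close>

lemma LIMSEQ_nonzero_norm_bounded_below:
  fixes f :: "nat \<Rightarrow> 'a :: real_normed_vector"
  assumes nonzero: "\<And>m. f m \<noteq> 0" and lim: "f \<longlonglongrightarrow> l" and "l \<noteq> 0"
  shows "\<exists>\<delta>>0. \<forall>m. \<delta> \<le> norm (f m)"
proof -
  have "eventually (\<lambda>m. norm l / 2 < norm (f m)) sequentially"
    using tendsto_norm[OF lim] \<open>l \<noteq> 0\<close> by (intro order_tendstoD(1)) auto
  then obtain M where M: "\<And>m. m \<ge> M \<Longrightarrow> norm l / 2 < norm (f m)"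
    by (auto simp: eventually_sequentially)
  define \<delta> where "\<delta> = Min (insert (norm l / 2) ((\<lambda>m. norm (f m)) ` {..<M}))"
  have "0 < \<delta>"
    unfolding \<delta>_def using nonzero \<open>l \<noteq> 0\<close> by simp
  moreover have "\<delta> \<le> norm (f m)" for m
  proof (cases "m < M")
    case True
    then show ?thesis unfolding \<delta>_def by (intro Min_le) auto
  next
    case False
    have "\<delta> \<le> norm l / 2" unfolding \<delta>_def by (intro Min_le) auto
    with M[of m] False show ?thesis by auto
  qed
  ultimately show ?thesis by blast
qed

lemma uniformly_separated_from_powers:
  fixes d :: complex
  assumes q: "0 < q" "q < 1"
    and "d \<noteq> 0"
    and avoid: "\<And>n j. d * complex_of_real q ^ n \<noteq> complex_of_real q ^ j"
  shows "\<exists>\<delta>>0. \<forall>n j. \<delta> * q ^ j \<le> norm (d * complex_of_real q ^ n - complex_of_real q ^ j)"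
proof -
  define Q where "Q = complex_of_real q"
  have norm_Q_power: "norm (Q ^ m) = q ^ m" for m
    using q by (simp add: Q_def norm_power)
  have Q_lim: "(\<lambda>m. Q ^ m) \<longlonglongrightarrow> 0"
    using q by (intro LIMSEQ_power_zero) (simp add: Q_def)
  obtain \<delta>\<^sub>1 where \<delta>\<^sub>1: "\<delta>\<^sub>1 > 0" "\<And>m. \<delta>\<^sub>1 \<le> norm (d * Q ^ m - 1)"
  proof -
    have "(\<lambda>m. d * Q ^ m - 1) \<longlonglongrightarrow> d * 0 - 1"
      by (intro tendsto_diff tendsto_mult tendsto_const Q_lim)
    moreover have "d * Q ^ m - 1 \<noteq> 0" for m
      using avoid[of m 0] by (simp add: Q_def)
    ultimately have "\<exists>\<delta>>0. \<forall>m. \<delta> \<le> norm (d * Q ^ m - 1)"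
      by (intro LIMSEQ_nonzero_norm_bounded_below[where l="d * 0 - 1"]) simp_all
    then show ?thesis using that by blast
  qed
  obtain \<delta>\<^sub>2 where \<delta>\<^sub>2: "\<delta>\<^sub>2 > 0" "\<And>m. \<delta>\<^sub>2 \<le> norm (d - Q ^ Suc m)"
  proof -
    have "(\<lambda>m. d - Q ^ Suc m) \<longlonglongrightarrow> d - 0"
      using LIMSEQ_Suc[OF Q_lim] by (intro tendsto_diff tendsto_const)
    moreover have "d - Q ^ Suc m \<noteq> 0" for m
      using avoid[of 0 "Suc m"] by (simp add: Q_def)
    ultimately have "\<exists>\<delta>>0. \<forall>m. \<delta> \<le> norm (d - Q ^ Suc m)"
      using \<open>d \<noteq> 0\<close> by (intro LIMSEQ_nonzero_norm_bounded_below[where l="d - 0"]) simp_all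
    then show ?thesis using that by blast
  qed
  have "min \<delta>\<^sub>1 \<delta>\<^sub>2 * q ^ j \<le> norm (d * Q ^ n - Q ^ j)" for n j
  proof (cases "j \<le> n")
    case True
    then obtain m where "n = j + m" using le_Suc_ex by blast
    then have "norm (d * Q ^ n - Q ^ j) = norm (Q ^ j * (d * Q ^ m - 1))"
      by (simp add: power_add algebra_simps)
    also have "\<dots> = q ^ j * norm (d * Q ^ m - 1)"
      by (simp only: norm_mult norm_Q_power)
    also have "\<dots> \<ge> q ^ j * min \<delta>\<^sub>1 \<delta>\<^sub>2"
      using \<delta>\<^sub>1(2)[of m] q by (intro mult_left_mono) auto
    finally show ?thesis by (simp add: mult.commute)
  next
    case False
    then obtain m where "j = n + Suc m" by (metis add_Suc_right less_imp_Suc_add not_le)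
    then have "norm (d * Q ^ n - Q ^ j) = norm (Q ^ n * (d - Q ^ Suc m))"
      by (simp only: power_add algebra_simps)
    also have "\<dots> = q ^ n * norm (d - Q ^ Suc m)"
      by (simp only: norm_mult norm_Q_power)
    also have "\<dots> \<ge> q ^ j * min \<delta>\<^sub>1 \<delta>\<^sub>2"
      using q \<delta>\<^sub>1(1) \<delta>\<^sub>2(1) \<delta>\<^sub>2(2)[of m] False by (intro mult_mono power_decreasing) auto
    finally show ?thesis by (simp add: mult.commute)
  qed
  then show ?thesis
    using \<delta>\<^sub>1 \<delta>\<^sub>2 unfolding Q_def by (intro exI[of _ "min \<delta>\<^sub>1 \<delta>\<^sub>2"]) auto
qed

lemma phi01_eq_suminf_prod:
  "phi01 b q z = (\<Sum>k. \<Prod>j<k. complex_of_real q ^ (2 * j) / (1 - complex_of_real q ^ Suc j)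
                                * (z / (1 - b * complex_of_real q ^ j)))"
proof -
  have "complex_of_real (q ^ (k * (k - 1))) = (\<Prod>j<k. complex_of_real q ^ (2 * j))" for k
  proof (induction k)
    case (Suc k)
    have "Suc k * (Suc k - 1) = k * (k - 1) + 2 * k" by (cases k) auto
    then have "complex_of_real (q ^ (Suc k * (Suc k - 1)))
             = complex_of_real (q ^ (k * (k - 1))) * complex_of_real q ^ (2 * k)"
      by (simp only: power_add of_real_mult of_real_power)
    with Suc show ?case by simp
  qed simp
  then show ?thesis
    unfolding phi01_def qpoch_def
    by (simp add: prod.distrib prod_dividef)
qed

theorem phi01_LIMSEQ:
  fixes d r :: complex
  assumes q: "0 < q" "q < 1"
    and "d \<noteq> 0"
    and avoid: "\<And>n j. d * complex_of_real q ^ n \<noteq> complex_of_real q ^ j"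
  shows "(\<lambda>n. phi01 (inverse (d * complex_of_real q ^ n)) q (- inverse (d * complex_of_real q ^ n) * r))
         \<longlonglongrightarrow> qpoch_inf (- r) q"
proof -
  define Q where "Q = complex_of_real q"
  define h where "h = (\<lambda>n j. Q ^ (2 * j) / (1 - Q ^ Suc j) * (- r / (d * Q ^ n - Q ^ j)))"
  have Q0: "Q \<noteq> 0" using q by (simp add: Q_def)
  have "- inverse (d * Q ^ n) * r / (1 - inverse (d * Q ^ n) * Q ^ j) = - r / (d * Q ^ n - Q ^ j)" for n j
    using Q0 \<open>d \<noteq> 0\<close> by (simp add: field_simps)
  then have phi_eq: "phi01 (inverse (d * Q ^ n)) q (- inverse (d * Q ^ n) * r) = (\<Sum>k. \<Prod>j<k. h n j)" for n
    unfolding phi01_eq_suminf_prod h_def Q_def by simp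
  obtain \<delta> where \<delta>: "\<delta> > 0" "\<And>n j. \<delta> * q ^ j \<le> norm (d * Q ^ n - Q ^ j)"
    using uniformly_separated_from_powers[OF q \<open>d \<noteq> 0\<close> avoid] unfolding Q_def by blast
  have "(\<lambda>n. \<Sum>k. \<Prod>j<k. h n j) \<longlonglongrightarrow> (\<Sum>k. \<Prod>j<k. r * Q ^ j / (1 - Q ^ Suc j))"
  proof (rule tendsto_suminf_prod)
    show "norm (h n j) \<le> q ^ j * (norm r / (\<delta> * (1 - q)))" for n j
    proof -
      have "1 - q \<le> norm (1 - Q ^ Suc j)"
        using norm_one_minus_power_ge[of Q j] q by (simp add: Q_def)
      then have "norm (h n j) \<le> q ^ (2 * j) / (1 - q) * (norm r / (\<delta> * q ^ j))"
        unfolding h_def using q \<delta>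
        by (auto simp: norm_mult norm_divide norm_power Q_def
                 intro!: mult_mono frac_le divide_nonneg_nonneg)
      also have "\<dots> = q ^ j * (norm r / (\<delta> * (1 - q)))"
        using q \<delta> by (simp add: power_mult power2_eq_square field_simps)
      finally show ?thesis .
    qed
    have "(\<lambda>n. h n j) \<longlonglongrightarrow> Q ^ (2 * j) / (1 - Q ^ Suc j) * (- r / (d * 0 - Q ^ j))" for j
      unfolding h_def using Q0 q by (intro tendsto_intros) (auto simp: Q_def)
    also have "Q ^ (2 * j) / (1 - Q ^ Suc j) * (- r / (d * 0 - Q ^ j)) = r * Q ^ j / (1 - Q ^ Suc j)" for j
      using Q0 by (simp add: power_mult power2_eq_square field_simps)
    finally show "(\<lambda>n. h n j) \<longlonglongrightarrow> r * Q ^ j / (1 - Q ^ Suc j)" for j .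
  qed (use q in auto)
  then show ?thesis
    unfolding Q_def[symmetric] phi_eq
    using suminf_euler_term[of q r] q by (simp add: euler_term_def[abs_def] Q_def)
qed

section \<open>The scaled \<open>q\<close>-Bessel function along \<open>\<nu> = -\<sigma> - n\<close>\<close>

lemma sin_pi_minus_of_nat:
  "sin (complex_of_real pi * (- \<sigma> - of_nat n)) = - ((-1) ^ n * sin (complex_of_real pi * \<sigma>))"
proof (induction n)
  case (Suc n)
  have "complex_of_real pi * (- \<sigma> - of_nat (Suc n)) = complex_of_real pi * (- \<sigma> - of_nat n) - complex_of_real pi"
    by (simp add: algebra_simps)
  with Suc show ?case by (simp add: sin_diff)
qed simp

lemma jfrak_scaled_eq:
  fixes q :: real and \<sigma> w L :: complex
  assumes q: "0 < q" "q < 1" and "\<nu> = - \<sigma> - of_nat n"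
  shows "sin (complex_of_real pi * \<nu>) * qpow q (\<nu> * (\<nu> + 1) / 4) * exp (- \<nu> * L) * jfrak q \<nu> L (2 * w)
    = - sin (complex_of_real pi * \<sigma>) * qpow q (- \<sigma> * (1 - \<sigma>) / 2)
      * qpoch_inf (qpow q (1 - \<sigma>)) q / qpoch_inf (complex_of_real q) q * qpoch (qpow q \<sigma>) q n
      * phi01 (inverse (qpow q (\<sigma> - 1) * complex_of_real q ^ n)) q
              (- inverse (qpow q (\<sigma> - 1) * complex_of_real q ^ n) * (qpow q (1/2) * w ^ 2))"
proof -
  define X where "X = \<nu> * (\<nu> + 1) / 4"
  define E where "E = of_nat n * (1 - \<sigma>) - of_nat n * (of_nat n + 1) / (2::complex)"
  define \<Phi> where "\<Phi> = phi01 (qpow q (\<nu> + 1)) q (- qpow q (\<nu> + 3/2) * (2 * w) ^ 2 / 4)"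
  have "qpow q (\<nu> + 1) * (qpow q (\<sigma> - 1) * complex_of_real q ^ n)
      = qpow q ((\<nu> + 1) + (\<sigma> - 1) + of_nat n)"
    by (simp only: qpow_add qpow_of_nat[OF q(1)] mult.assoc)
  also have "\<dots> = 1"
    by (simp add: assms(3) qpow_def)
  finally have b: "qpow q (\<nu> + 1) = inverse (qpow q (\<sigma> - 1) * complex_of_real q ^ n)"
    by (metis inverse_unique mult.commute)
  have bQ: "qpow q (\<nu> + 1) * complex_of_real q ^ n = qpow q (1 - \<sigma>)"
    unfolding qpow_of_nat[OF q(1), symmetric] qpow_add[symmetric]
    by (intro arg_cong[where f="qpow q"]) (simp add: assms(3))
  have "qpow q (\<nu> + 3/2) = qpow q (\<nu> + 1) * qpow q (1/2)"
    unfolding qpow_add[symmetric] by (intro arg_cong[where f="qpow q"]) simp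
  then have \<Phi>: "\<Phi> = phi01 (inverse (qpow q (\<sigma> - 1) * complex_of_real q ^ n)) q
                    (- inverse (qpow q (\<sigma> - 1) * complex_of_real q ^ n) * (qpow q (1/2) * w ^ 2))"
    unfolding \<Phi>_def b by (simp add: power_mult_distrib mult_ac)
  have "qpoch_inf (qpow q (\<nu> + 1)) q = qpoch (qpow q (\<nu> + 1)) q n * qpoch_inf (qpow q (1 - \<sigma>)) q"
    using qpoch_inf_eq_qpoch_mult[of q "qpow q (\<nu> + 1)" n] q unfolding bQ by simp
  also have "qpoch (qpow q (\<nu> + 1)) q n = (-1) ^ n * qpow q E * qpoch (qpow q \<sigma>) q n"
    using qpoch_reflect[OF q(1), of \<sigma> n] by (simp add: assms(3) E_def algebra_simps)
  finally have split: "qpoch_inf (qpow q (\<nu> + 1)) q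
      = (-1) ^ n * qpow q E * qpoch (qpow q \<sigma>) q n * qpoch_inf (qpow q (1 - \<sigma>)) q" .
  have powers: "qpow q X * qpow q X * qpow q E = qpow q (- \<sigma> * (1 - \<sigma>) / 2)"
    unfolding qpow_add[symmetric] X_def E_def assms(3)
    by (intro arg_cong[where f="qpow q"]) (simp add: field_simps)
  have sin: "sin (complex_of_real pi * \<nu>) = - ((-1) ^ n * sin (complex_of_real pi * \<sigma>))"
    unfolding assms(3) by (rule sin_pi_minus_of_nat)
  have exp: "exp (- \<nu> * L) * exp (\<nu> * L) = 1"
    by (simp flip: exp_add)
  have sign: "(-1::complex) ^ n * (-1) ^ n = 1"
    by (simp flip: power_mult_distrib)
  have "sin (complex_of_real pi * \<nu>) * qpow q X * exp (- \<nu> * L) * jfrak q \<nu> L (2 * w)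
      = sin (complex_of_real pi * \<nu>) * (qpow q X * qpow q X) * (exp (- \<nu> * L) * exp (\<nu> * L))
        * qpoch_inf (qpow q (\<nu> + 1)) q / qpoch_inf (complex_of_real q) q * \<Phi>"
    unfolding jfrak_def X_def[symmetric] \<Phi>_def[symmetric] by (simp add: divide_inverse mult_ac)
  also have "\<dots> = - sin (complex_of_real pi * \<sigma>) * ((-1) ^ n * (-1) ^ n) * (qpow q X * qpow q X * qpow q E)
        * qpoch_inf (qpow q (1 - \<sigma>)) q / qpoch_inf (complex_of_real q) q * qpoch (qpow q \<sigma>) q n * \<Phi>"
    unfolding sin split exp by (simp add: divide_inverse mult_ac)
  finally show ?thesis
    unfolding sign powers \<Phi> by (simp add: X_def)
qed

lemma qpow_mult_power_ne_power:
  assumes "0 < q" and "\<forall>m::int. qpow q \<sigma> \<noteq> qpow q (of_int m)"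
  shows "qpow q (\<sigma> - 1) * complex_of_real q ^ n \<noteq> complex_of_real q ^ j"
proof
  assume eq: "qpow q (\<sigma> - 1) * complex_of_real q ^ n = complex_of_real q ^ j"
  have "qpow q \<sigma> * qpow q (of_nat n) = qpow q (\<sigma> - 1) * qpow q (of_nat n) * qpow q 1"
    unfolding qpow_add[symmetric] by (intro arg_cong[where f="qpow q"]) simp
  also have "\<dots> = complex_of_real q ^ Suc j"
    using eq qpow_of_nat[OF assms(1), of 1] by (simp add: qpow_of_nat[OF assms(1)])
  also have "\<dots> = qpow q (of_int (int (Suc j) - int n)) * qpow q (of_nat n)"
    unfolding qpow_of_nat[OF assms(1), symmetric] qpow_add[symmetric]
    by (intro arg_cong[where f="qpow q"]) simp
  finally have "qpow q \<sigma> = qpow q (of_int (int (Suc j) - int n))"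
    using qpow_nonzero by simp
  with assms(2) show False by blast
qed

theorem mainTheorem9:
  fixes q :: real and \<sigma> w L :: complex
  assumes "0 < q" "q < 1"
    and "w \<noteq> 0"
    and "exp L = w"
    and "\<forall>m::int. qpow q \<sigma> \<noteq> qpow q (of_int m)"
  shows "(\<lambda>n::nat. let \<nu> = - \<sigma> - of_nat n in
            sin (complex_of_real pi * \<nu>) * qpow q (\<nu> * (\<nu> + 1) / 4)
            * exp (- \<nu> * L) * jfrak q \<nu> L (2 * w))
         \<longlonglongrightarrow>
         - sin (complex_of_real pi * \<sigma>) * qpow q (- \<sigma> * (1 - \<sigma>) / 2)
           * (qpoch_inf (qpow q \<sigma>) q * qpoch_inf (qpow q (1 - \<sigma>)) q
              * qpoch_inf (- qpow q (1/2) * w ^ 2) q)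
           / qpoch_inf (complex_of_real q) q"
proof -
  \<comment> \<open>\<open>w \<noteq> 0\<close> and \<open>exp L = w\<close> are not needed: the branch factor \<open>exp (- \<nu> * L)\<close> cancels
      the one inside \<open>jfrak\<close>, whatever \<open>L\<close> is.\<close>
  note q = assms(1,2)
  define K where "K = - sin (complex_of_real pi * \<sigma>) * qpow q (- \<sigma> * (1 - \<sigma>) / 2)
     * qpoch_inf (qpow q (1 - \<sigma>)) q / qpoch_inf (complex_of_real q) q"
  have "(\<lambda>n. K * qpoch (qpow q \<sigma>) q n
           * phi01 (inverse (qpow q (\<sigma> - 1) * complex_of_real q ^ n)) q
               (- inverse (qpow q (\<sigma> - 1) * complex_of_real q ^ n) * (qpow q (1/2) * w ^ 2)))
        \<longlonglongrightarrow> K * qpoch_inf (qpow q \<sigma>) q * qpoch_inf (- (qpow q (1/2) * w ^ 2)) q"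
    using q qpow_mult_power_ne_power[OF q(1) assms(5)]
    by (intro tendsto_mult tendsto_const qpoch_LIMSEQ phi01_LIMSEQ qpow_nonzero) auto
  also have "K * qpoch_inf (qpow q \<sigma>) q * qpoch_inf (- (qpow q (1/2) * w ^ 2)) q
     = - sin (complex_of_real pi * \<sigma>) * qpow q (- \<sigma> * (1 - \<sigma>) / 2)
           * (qpoch_inf (qpow q \<sigma>) q * qpoch_inf (qpow q (1 - \<sigma>)) q
              * qpoch_inf (- qpow q (1/2) * w ^ 2) q)
           / qpoch_inf (complex_of_real q) q"
    unfolding K_def divide_inverse minus_mult_left[symmetric] by algebra
  finally show ?thesis
    unfolding Let_def jfrak_scaled_eq[OF q refl] K_def .
qed

end
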